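(* Let $\nu\ge1$, $N,K\ge1$, $j\in\mathbb{N}$, $\tau>0$, let $\Lambda_N=\mathrm{diag}(\lambda_{-N},\dots,\lambda_N)$ be a complex diagonal matrix, $Q$ an invertible complex $(2N+1)\times(2N+1)$ matrix, $\mathcal{L}_N=Q\Lambda_NQ^{-1}$, and let $\sigma_{K,0}$ be a constant such that $\|f-P_Kf\|_{C^0}\le\sigma_{K,0}\|f'\|_{C^0}$ for all $f\in C^1([-1,1],\mathbb{C})$. Let $D_N(t)$ be the diagonal matrix $D_N(t)=\tau\int_{-1}^t|e^{\tau(t-s)\Lambda_N}|\,ds$ (absolute value componentwise). Then for every $\varphi_N\in C([-1,1],\mathbb{C}^{2N+1})$, $$\Big\|(I-P_K)\Big(t\mapsto\tau\int_{-1}^te^{\tau(t-s)\mathcal{L}_N}\mathcal{D}^j\varphi_N(s)\,ds\Big)\Big\|_{\ell^1_\nu(C^0)}\le\tau\sigma_{K,0}\,\big\||\mathcal{D}^j|+|Q|\,|\Lambda_N|\,D_N(1)\,|Q^{-1}|\,|\mathcal{D}^j|\big\|_{B(\ell^1_\nu,\ell^1_\nu)}\|\varphi_N\|_{\ell^1_\nu(C^0)}.$$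
   Context: Vectors in $\mathbb{C}^{2N+1}$ are indexed by $n=-N,\dots,N$; $\mathcal{D}=\mathrm{diag}(in)_{|n|\le N}$, and $|\cdot|$ applied to a matrix denotes the entrywise absolute value. $\|v\|_{\ell^1_\nu}=\sum_{|n|\le N}|v_n|\nu^{|n|}$ on $\mathbb{C}^{2N+1}$ and $\|\cdot\|_{B(\ell^1_\nu,\ell^1_\nu)}$ is the induced operator norm. For a vector-valued function $\psi$, $\|\psi\|_{\ell^1_\nu(C^0)}=\sum_{|n|\le N}\|\psi_n\|_{C^0}\nu^{|n|}$ with $\|\cdot\|_{C^0}$ the sup norm on $[-1,1]$. $P_K$ maps $f\in C([-1,1],\mathbb{C})$ to its polynomial interpolant of degree $\le K$ at the Chebyshev points $t_k=\cos(\pi k/K)$, $k=0,\dots,K$, and acts componentwise on vector-valued functions. *)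

theory Defs
  imports "HOL-Analysis.Analysis" "HOL-Computational_Algebra.Polynomial"
begin

text \<open>Vectors in C^(2N+1) are functions int => complex, indexed by n in {-N..N};
  (2N+1)x(2N+1) complex matrices are functions int => int => complex, of which only
  the entries with indices in {-N..N} matter.\<close>

definition idx :: "nat \<Rightarrow> int set" where
  "idx N = {- int N .. int N}"

definition cm_mult :: "nat \<Rightarrow> (int \<Rightarrow> int \<Rightarrow> complex) \<Rightarrow> (int \<Rightarrow> int \<Rightarrow> complex) \<Rightarrow> (int \<Rightarrow> int \<Rightarrow> complex)" where
  "cm_mult N A B = (\<lambda>i j. \<Sum>k\<in>idx N. A i k * B k j)"

definition cm_add :: "(int \<Rightarrow> int \<Rightarrow> complex) \<Rightarrow> (int \<Rightarrow> int \<Rightarrow> complex) \<Rightarrow> (int \<Rightarrow> int \<Rightarrow> complex)" where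
  "cm_add A B = (\<lambda>i j. A i j + B i j)"

definition cm_id :: "int \<Rightarrow> int \<Rightarrow> complex" where
  "cm_id = (\<lambda>i j. if i = j then 1 else 0)"

definition cm_diag :: "(int \<Rightarrow> complex) \<Rightarrow> (int \<Rightarrow> int \<Rightarrow> complex)" where
  "cm_diag d = (\<lambda>i j. if i = j then d i else 0)"

definition cm_scale :: "complex \<Rightarrow> (int \<Rightarrow> int \<Rightarrow> complex) \<Rightarrow> (int \<Rightarrow> int \<Rightarrow> complex)" where
  "cm_scale c A = (\<lambda>i j. c * A i j)"

definition cm_abs :: "(int \<Rightarrow> int \<Rightarrow> complex) \<Rightarrow> (int \<Rightarrow> int \<Rightarrow> complex)" where
  "cm_abs A = (\<lambda>i j. complex_of_real (cmod (A i j)))"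

fun cm_pow :: "nat \<Rightarrow> (int \<Rightarrow> int \<Rightarrow> complex) \<Rightarrow> nat \<Rightarrow> (int \<Rightarrow> int \<Rightarrow> complex)" where
  "cm_pow N A 0 = cm_id"
| "cm_pow N A (Suc k) = cm_mult N A (cm_pow N A k)"

definition cm_exp :: "nat \<Rightarrow> (int \<Rightarrow> int \<Rightarrow> complex) \<Rightarrow> (int \<Rightarrow> int \<Rightarrow> complex)" where
  "cm_exp N A = (\<lambda>i j. (\<Sum>k. cm_pow N A k i j / of_nat (fact k)))"

definition cm_apply :: "nat \<Rightarrow> (int \<Rightarrow> int \<Rightarrow> complex) \<Rightarrow> (int \<Rightarrow> complex) \<Rightarrow> (int \<Rightarrow> complex)" where
  "cm_apply N A v = (\<lambda>i. \<Sum>k\<in>idx N. A i k * v k)"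

definition l1nu :: "nat \<Rightarrow> real \<Rightarrow> (int \<Rightarrow> complex) \<Rightarrow> real" where
  "l1nu N \<nu> v = (\<Sum>n\<in>idx N. cmod (v n) * \<nu> ^ nat \<bar>n\<bar>)"

definition opnorm_l1nu :: "nat \<Rightarrow> real \<Rightarrow> (int \<Rightarrow> int \<Rightarrow> complex) \<Rightarrow> real" where
  "opnorm_l1nu N \<nu> A = Sup {l1nu N \<nu> (cm_apply N A v) / l1nu N \<nu> v | v. l1nu N \<nu> v \<noteq> 0}"

definition c0norm :: "(real \<Rightarrow> complex) \<Rightarrow> real" where
  "c0norm f = (SUP x\<in>{-1..1}. cmod (f x))"

definition l1nu_C0 :: "nat \<Rightarrow> real \<Rightarrow> (int \<Rightarrow> real \<Rightarrow> complex) \<Rightarrow> real" where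
  "l1nu_C0 N \<nu> \<psi> = (\<Sum>n\<in>idx N. c0norm (\<psi> n) * \<nu> ^ nat \<bar>n\<bar>)"

definition cheb :: "nat \<Rightarrow> nat \<Rightarrow> real" where
  "cheb K k = cos (pi * real k / real K)"

definition interpK :: "nat \<Rightarrow> (real \<Rightarrow> complex) \<Rightarrow> (real \<Rightarrow> complex)" where
  "interpK K f = (let p = (THE p :: complex poly. degree p \<le> K \<and>
        (\<forall>k\<le>K. poly p (complex_of_real (cheb K k)) = f (cheb K k)))
     in (\<lambda>x. poly p (complex_of_real x)))"

text \<open>The differentiation operator D = diag(i n).\<close>
definition Dmat :: "int \<Rightarrow> int \<Rightarrow> complex" where
  "Dmat = cm_diag (\<lambda>n. \<i> * of_int n)"

end

theory Submission
  imports Defs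
begin

text \<open>Since L = Q \<Lambda> Q^-1, the exponential diagonalises and component n of g equals
  \<tau> \<Sum>_a Q_na J_a, where J_a(t) = \<integral>_{-1}^t exp(\<tau>(t-s)\<lambda>_a) w_a(s) ds and w = Q^-1 D^j \<phi>.
  Each J_a solves J' = w_a + \<tau>\<lambda>_a J, so g_n is C^1 with g_n' = \<tau> (D^j \<phi> + Q \<tau>\<Lambda> J)_n, and
  |J_a(t)| \<le> \<parallel>w_a\<parallel> \<integral>_{-1}^1 |exp(\<tau>(1-s)\<lambda>_a)| ds because the left integral grows with t.
  Bounding every factor entrywise in modulus gives \<parallel>g_n'\<parallel> \<le> \<tau> (M \<Phi>)_n with \<Phi>_m = \<parallel>\<phi>_m\<parallel>,
  hence an interpolation error of at most \<sigma>\<tau> (M \<Phi>)_n, and the weighted sum over n is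
  controlled by the operator norm of M.\<close>

section \<open>Matrices on the index range {-N..N}\<close>

lemma finite_idx [simp]: "finite (idx N)"
  by (simp add: idx_def)

lemma cm_apply_mult: "cm_apply N (cm_mult N A B) v = cm_apply N A (cm_apply N B v)"
  unfolding cm_apply_def cm_mult_def fun_eq_iff
  by (simp add: sum_distrib_left sum_distrib_right mult.assoc) (rule allI, rule sum.swap)

lemma cm_apply_add: "cm_apply N (cm_add A B) v i = cm_apply N A v i + cm_apply N B v i"
  by (simp add: cm_apply_def cm_add_def distrib_right sum.distrib)

lemma cm_apply_diag: "i \<in> idx N \<Longrightarrow> cm_apply N (cm_diag d) v i = d i * v i"
  by (simp add: cm_apply_def cm_diag_def if_distrib[of "\<lambda>x. x * _"] cong: if_cong)

lemma cm_apply_cong: "(\<And>k. k \<in> idx N \<Longrightarrow> v k = u k) \<Longrightarrow> cm_apply N A v = cm_apply N A u"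
  by (simp add: cm_apply_def)

lemma cm_mult_diag_left: "i \<in> idx N \<Longrightarrow> cm_mult N (cm_diag d) B i j = d i * B i j"
  by (simp add: cm_mult_def cm_diag_def if_distrib[of "\<lambda>x. x * _"] cong: if_cong)

lemma cm_scale_diag: "cm_scale c (cm_diag d) = cm_diag (\<lambda>i. c * d i)"
  by (auto simp: cm_scale_def cm_diag_def fun_eq_iff)

lemma cm_pow_diag: "i \<in> idx N \<Longrightarrow> cm_pow N (cm_diag d) k i j = (if i = j then d i ^ k else 0)"
  by (induction k arbitrary: j) (simp_all add: cm_id_def cm_mult_diag_left)

lemma sums_exp_complex: "(\<lambda>k. z ^ k / of_nat (fact k)) sums exp (z :: complex)"
  using exp_converges[of z] by (simp add: scaleR_conv_of_real divide_inverse mult.commute)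

lemma cm_exp_diag: "i \<in> idx N \<Longrightarrow> cm_exp N (cm_diag d) i j = (if i = j then exp (d i) else 0)"
  using sums_unique[OF sums_exp_complex[of "d i"]] by (auto simp: cm_exp_def cm_pow_diag)

definition cm_right_inverse :: "nat \<Rightarrow> (int \<Rightarrow> int \<Rightarrow> complex) \<Rightarrow> (int \<Rightarrow> int \<Rightarrow> complex) \<Rightarrow> bool" where
  "cm_right_inverse N A B \<longleftrightarrow> (\<forall>i\<in>idx N. \<forall>k\<in>idx N. cm_mult N A B i k = cm_id i k)"

lemma cm_apply_right_inverse:
  assumes "cm_right_inverse N A B" "i \<in> idx N"
  shows "cm_apply N A (cm_apply N B v) i = v i"
proof -
  have "cm_apply N A (cm_apply N B v) i = (\<Sum>k\<in>idx N. cm_id i k * v k)"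
    using assms unfolding cm_apply_mult[symmetric] by (simp add: cm_apply_def cm_right_inverse_def)
  also have "\<dots> = v i"
    using assms(2) by (simp add: cm_id_def if_distrib[of "\<lambda>x. x * _"] cong: if_cong)
  finally show ?thesis .
qed

lemma cm_scale_similar:
  "cm_scale c (cm_mult N Q (cm_mult N (cm_diag d) Qinv)) = cm_mult N Q (cm_mult N (cm_diag (\<lambda>i. c * d i)) Qinv)"
  by (auto simp: fun_eq_iff cm_scale_def cm_mult_def[of N Q] sum_distrib_left cm_mult_diag_left mult_ac
           intro!: sum.cong)

lemma cm_pow_similar:
  assumes "cm_right_inverse N Q Qinv" "cm_right_inverse N Qinv Q" "i \<in> idx N" "j \<in> idx N"
  shows "cm_pow N (cm_mult N Q (cm_mult N (cm_diag d) Qinv)) k i j = (\<Sum>a\<in>idx N. Q i a * d a ^ k * Qinv a j)"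
  using assms(3)
proof (induction k arbitrary: i)
  case 0
  then show ?case
    using assms(1,4) by (simp add: cm_right_inverse_def cm_mult_def)
next
  case (Suc k)
  let ?L = "cm_mult N Q (cm_mult N (cm_diag d) Qinv)"
  have "cm_pow N ?L (Suc k) i j = (\<Sum>b\<in>idx N. ?L i b * (\<Sum>a\<in>idx N. Q b a * d a ^ k * Qinv a j))"
    using Suc.IH by (simp add: cm_mult_def[of N ?L])
  also have "\<dots> = (\<Sum>b\<in>idx N. \<Sum>c\<in>idx N. \<Sum>a\<in>idx N. Q i c * d c * Qinv c b * (Q b a * d a ^ k * Qinv a j))"
    by (simp add: cm_mult_def[of N Q] cm_mult_diag_left sum_product mult_ac)
  also have "\<dots> = (\<Sum>c\<in>idx N. \<Sum>a\<in>idx N. Q i c * d c * cm_mult N Qinv Q c a * d a ^ k * Qinv a j)"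
    by (simp add: cm_mult_def sum_distrib_left sum_distrib_right mult_ac)
      (subst sum.swap, rule sum.cong[OF refl], rule sum.swap)
  also have "\<dots> = (\<Sum>c\<in>idx N. Q i c * d c ^ Suc k * Qinv c j)"
    using assms(2)
    by (simp add: cm_right_inverse_def cm_id_def if_distrib[of "\<lambda>x. _ * x"] if_distrib[of "\<lambda>x. x * _"]
        mult.assoc cong: if_cong)
  finally show ?case .
qed

lemma cm_exp_similar:
  assumes "cm_right_inverse N Q Qinv" "cm_right_inverse N Qinv Q" "i \<in> idx N" "j \<in> idx N"
  shows "cm_exp N (cm_mult N Q (cm_mult N (cm_diag d) Qinv)) i j = (\<Sum>a\<in>idx N. Q i a * exp (d a) * Qinv a j)"
proof -
  have "(\<lambda>k. \<Sum>a\<in>idx N. Q i a * Qinv a j * (d a ^ k / of_nat (fact k))) sums (\<Sum>a\<in>idx N. Q i a * Qinv a j * exp (d a))"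
    by (intro sums_sum sums_mult sums_exp_complex)
  then show ?thesis
    unfolding cm_exp_def by (intro sums_unique[symmetric]) (simp add: cm_pow_similar[OF assms] sum_divide_distrib mult_ac)
qed

lemma cm_apply_exp_similar:
  assumes "cm_right_inverse N Q Qinv" "cm_right_inverse N Qinv Q" "i \<in> idx N"
  shows "cm_apply N (cm_exp N (cm_mult N Q (cm_mult N (cm_diag d) Qinv))) v i
           = (\<Sum>a\<in>idx N. Q i a * (exp (d a) * cm_apply N Qinv v a))"
  using assms
  by (simp add: cm_apply_def cm_exp_similar sum_distrib_left sum_distrib_right mult_ac) (rule sum.swap)

section \<open>Entrywise bounds and weighted norms\<close>

definition abs_apply :: "nat \<Rightarrow> (int \<Rightarrow> int \<Rightarrow> complex) \<Rightarrow> (int \<Rightarrow> real) \<Rightarrow> int \<Rightarrow> real" where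
  "abs_apply N A x i = (\<Sum>k\<in>idx N. cmod (A i k) * x k)"

lemma cm_apply_abs: "cm_apply N (cm_abs A) (\<lambda>k. of_real (x k)) i = of_real (abs_apply N A x i)"
  by (simp add: cm_apply_def cm_abs_def abs_apply_def)

lemma norm_cm_apply_le:
  assumes "\<And>k. k \<in> idx N \<Longrightarrow> cmod (v k) \<le> x k"
  shows "cmod (cm_apply N A v i) \<le> abs_apply N A x i"
  unfolding cm_apply_def abs_apply_def
  by (rule order_trans[OF norm_sum sum_mono]) (auto simp: norm_mult intro!: mult_left_mono assms)

lemma c0norm_upper: "continuous_on {-1..1} f \<Longrightarrow> s \<in> {-1..1} \<Longrightarrow> cmod (f s) \<le> c0norm f"
  unfolding c0norm_def
  by (intro cSUP_upper bounded_imp_bdd_above compact_imp_bounded compact_continuous_image continuous_intros) auto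

lemma c0norm_least: "(\<And>s. s \<in> {-1..1} \<Longrightarrow> cmod (f s) \<le> B) \<Longrightarrow> c0norm f \<le> B"
  unfolding c0norm_def by (rule cSUP_least) auto

lemma c0norm_nonneg: "continuous_on {-1..1} f \<Longrightarrow> 0 \<le> c0norm f"
  by (rule order_trans[OF norm_ge_zero c0norm_upper[of f 0]]) auto

lemma l1nu_nonneg: "0 \<le> \<nu> \<Longrightarrow> 0 \<le> l1nu N \<nu> v"
  unfolding l1nu_def by (intro sum_nonneg mult_nonneg_nonneg) auto

lemma norm_le_l1nu:
  assumes "1 \<le> \<nu>" "k \<in> idx N"
  shows "cmod (v k) \<le> l1nu N \<nu> v"
proof -
  have "cmod (v k) \<le> cmod (v k) * \<nu> ^ nat \<bar>k\<bar>"
    using assms(1) by (simp add: mult_le_cancel_left1 one_le_power)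
  also have "\<dots> \<le> l1nu N \<nu> v"
    unfolding l1nu_def using assms by (intro member_le_sum) auto
  finally show ?thesis .
qed

lemma bdd_above_opnorm_l1nu:
  assumes "1 \<le> \<nu>"
  shows "bdd_above {l1nu N \<nu> (cm_apply N A v) / l1nu N \<nu> v | v. l1nu N \<nu> v \<noteq> 0}"
proof -
  define C where "C = (\<Sum>n\<in>idx N. abs_apply N A (\<lambda>_. 1) n * \<nu> ^ nat \<bar>n\<bar>)"
  have "l1nu N \<nu> (cm_apply N A v) \<le> (\<Sum>n\<in>idx N. abs_apply N A (\<lambda>_. l1nu N \<nu> v) n * \<nu> ^ nat \<bar>n\<bar>)" for v
    unfolding l1nu_def[of _ _ "cm_apply N A v"] using assms
    by (intro sum_mono mult_right_mono norm_cm_apply_le norm_le_l1nu[OF assms]) auto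
  also have "\<dots> v = C * l1nu N \<nu> v" for v
    by (simp add: C_def abs_apply_def sum_distrib_left sum_distrib_right mult_ac)
  finally have "l1nu N \<nu> (cm_apply N A v) / l1nu N \<nu> v \<le> C" if "l1nu N \<nu> v \<noteq> 0" for v
    using that l1nu_nonneg[of \<nu> N v] assms by (simp add: divide_le_eq)
  then show ?thesis
    unfolding bdd_above_def by blast
qed

lemma l1nu_cm_apply_le:
  assumes "1 \<le> \<nu>"
  shows "l1nu N \<nu> (cm_apply N A v) \<le> opnorm_l1nu N \<nu> A * l1nu N \<nu> v"
proof (cases "l1nu N \<nu> v = 0")
  case True
  then have "v k = 0" if "k \<in> idx N" for k
    using norm_le_l1nu[OF assms that, of v] by simp
  then have "cm_apply N A v = (\<lambda>_. 0)"
    by (simp add: cm_apply_def fun_eq_iff)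
  then show ?thesis
    using True by (simp add: l1nu_def)
next
  case False
  then have "0 < l1nu N \<nu> v"
    using l1nu_nonneg[of \<nu> N v] assms by linarith
  moreover have "l1nu N \<nu> (cm_apply N A v) / l1nu N \<nu> v \<le> opnorm_l1nu N \<nu> A"
    unfolding opnorm_l1nu_def using False by (intro cSup_upper bdd_above_opnorm_l1nu assms) blast
  ultimately show ?thesis
    by (simp add: divide_le_eq)
qed

lemma l1nu_C0_le_l1nu:
  assumes "0 \<le> \<nu>" "\<And>n. n \<in> idx N \<Longrightarrow> c0norm (\<psi> n) \<le> c * cmod (b n)"
  shows "l1nu_C0 N \<nu> \<psi> \<le> c * l1nu N \<nu> b"
  unfolding l1nu_C0_def l1nu_def sum_distrib_left
proof (intro sum_mono)
  fix n assume "n \<in> idx N"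
  then have "c0norm (\<psi> n) * \<nu> ^ nat \<bar>n\<bar> \<le> (c * cmod (b n)) * \<nu> ^ nat \<bar>n\<bar>"
    using assms by (intro mult_right_mono) auto
  then show "c0norm (\<psi> n) * \<nu> ^ nat \<bar>n\<bar> \<le> c * (cmod (b n) * \<nu> ^ nat \<bar>n\<bar>)"
    by (simp add: mult.assoc)
qed

lemma l1nu_c0norm:
  assumes "\<And>n. n \<in> idx N \<Longrightarrow> continuous_on {-1..1} (\<phi> n)"
  shows "l1nu N \<nu> (\<lambda>n. of_real (c0norm (\<phi> n))) = l1nu_C0 N \<nu> \<phi>"
  unfolding l1nu_def l1nu_C0_def using assms by (intro sum.cong refl) (simp add: c0norm_nonneg)

section \<open>Chebyshev interpolation\<close>

lemma inj_on_cheb: "1 \<le> K \<Longrightarrow> inj_on (cheb K) {..K}"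
proof (rule inj_onI)
  fix k k' assume K: "1 \<le> K" and kk: "k \<in> {..K}" "k' \<in> {..K}" and eq: "cheb K k = cheb K k'"
  have "0 \<le> pi * real k / real K" "pi * real k / real K \<le> pi"
       "0 \<le> pi * real k' / real K" "pi * real k' / real K \<le> pi"
    using K kk by (auto simp: field_simps)
  from cos_inj_pi[OF this] eq have "pi * real k / real K = pi * real k' / real K"
    by (simp add: cheb_def)
  with K show "k = k'"
    by (simp add: field_simps)
qed

lemma poly_eq_0_if_vanishes_at_cheb:
  fixes p :: "complex poly"
  assumes K: "1 \<le> K" and p: "degree p \<le> K" "\<And>k. k \<le> K \<Longrightarrow> poly p (of_real (cheb K k)) = 0"
  shows "p = 0"
proof (rule ccontr)
  assume "p \<noteq> 0"
  have inj: "inj_on (\<lambda>k. complex_of_real (cheb K k)) {..K}"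
    using inj_on_cheb[OF K] by (auto simp: inj_on_def)
  have "K + 1 = card ((\<lambda>k. complex_of_real (cheb K k)) ` {..K})"
    using card_image[OF inj] by simp
  also have "\<dots> \<le> card {x. poly p x = 0}"
    by (rule card_mono[OF poly_roots_finite[OF \<open>p \<noteq> 0\<close>]]) (use p in auto)
  also have "\<dots> \<le> degree p"
    by (rule card_poly_roots_bound[OF \<open>p \<noteq> 0\<close>])
  finally show False
    using p by simp
qed

lemma interpK_cong: "(\<And>k. k \<le> K \<Longrightarrow> f (cheb K k) = g (cheb K k)) \<Longrightarrow> interpK K f = interpK K g"
  unfolding interpK_def by simp

lemma interpK_zero: "1 \<le> K \<Longrightarrow> interpK K (\<lambda>_. 0) = (\<lambda>_. 0)"
proof -
  assume K: "1 \<le> K"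
  have "(THE p :: complex poly. degree p \<le> K \<and> (\<forall>k\<le>K. poly p (of_real (cheb K k)) = 0)) = 0"
    by (rule the_equality) (auto intro: poly_eq_0_if_vanishes_at_cheb[OF K])
  then show ?thesis
    by (simp add: interpK_def)
qed

definition interp_error_bound :: "nat \<Rightarrow> real \<Rightarrow> bool" where
  "interp_error_bound K \<sigma> \<longleftrightarrow>
     (\<forall>f f'. (\<forall>x\<in>{-1..1}. (f has_vector_derivative f' x) (at x within {-1..1}))
               \<and> continuous_on {-1..1} f'
             \<longrightarrow> c0norm (\<lambda>x. f x - interpK K f x) \<le> \<sigma> * c0norm f')"

text \<open>Apply the bound to the node polynomial, which interpolates to 0 but does not vanish
  identically on [-1,1].\<close>
lemma interp_error_bound_nonneg:
  assumes K: "1 \<le> K" and \<sigma>: "interp_error_bound K \<sigma>"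
  shows "0 \<le> \<sigma>"
proof -
  define P where "P = (\<Prod>k\<le>K. [:- complex_of_real (cheb K k), 1:])"
  define f where "f = (\<lambda>x::real. poly P (of_real x))"
  define f' where "f' = (\<lambda>x::real. poly (pderiv P) (of_real x))"
  have "P \<noteq> 0"
    by (auto simp: P_def prod_zero_iff)
  have "interpK K f = interpK K (\<lambda>_. 0)"
    by (rule interpK_cong) (auto simp: f_def P_def poly_prod prod_zero_iff)
  then have interp: "interpK K f = (\<lambda>_. 0)"
    using interpK_zero[OF K] by simp
  have "(f has_vector_derivative f' x) (at x within {-1..1})" for x
    unfolding f_def f'_def by (intro has_vector_derivative_real_field poly_DERIV)
  moreover have f': "continuous_on {-1..1} f'"
    unfolding f'_def by (intro continuous_intros)
  ultimately have "c0norm (\<lambda>x. f x - interpK K f x) \<le> \<sigma> * c0norm f'"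
    using \<sigma> unfolding interp_error_bound_def by blast
  then have le: "c0norm f \<le> \<sigma> * c0norm f'"
    by (simp add: interp)
  have "infinite {-1..1::real}"
    by (simp add: infinite_Icc)
  moreover have "finite {x::real. poly P (of_real x) = 0}"
    using finite_vimageI[OF poly_roots_finite[OF \<open>P \<noteq> 0\<close>], of complex_of_real]
    by (simp add: inj_on_def vimage_def)
  ultimately have "\<not> {-1..1::real} \<subseteq> {x. poly P (of_real x) = 0}"
    using finite_subset by blast
  then obtain x :: real where x: "x \<in> {-1..1}" "poly P (of_real x) \<noteq> 0"
    by blast
  have "0 < cmod (f x)"
    using x by (simp add: f_def)
  also have "\<dots> \<le> c0norm f"
    using x by (intro c0norm_upper) (auto simp: f_def intro!: continuous_intros)
  finally have "0 < \<sigma> * c0norm f'"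
    using le by linarith
  then show ?thesis
    using c0norm_nonneg[OF f'] by (simp add: zero_less_mult_iff)
qed

lemma interp_error_le:
  assumes K: "1 \<le> K" and \<sigma>: "interp_error_bound K \<sigma>"
    and eq: "\<And>t. t \<in> {-1..1} \<Longrightarrow> g t = G t"
    and G: "\<And>x. x \<in> {-1..1} \<Longrightarrow> (G has_vector_derivative G' x) (at x within {-1..1})"
    and G': "continuous_on {-1..1} G'"
    and bound: "\<And>x. x \<in> {-1..1} \<Longrightarrow> cmod (G' x) \<le> B"
  shows "c0norm (\<lambda>t. g t - interpK K g t) \<le> \<sigma> * B"
proof -
  have "interpK K g = interpK K G"
    by (intro interpK_cong eq) (simp add: cheb_def)
  then have "c0norm (\<lambda>t. g t - interpK K g t) = c0norm (\<lambda>t. G t - interpK K G t)"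
    unfolding c0norm_def by (intro SUP_cong) (auto simp: eq)
  also have "\<dots> \<le> \<sigma> * c0norm G'"
    using \<sigma> G G' unfolding interp_error_bound_def by blast
  also have "\<dots> \<le> \<sigma> * B"
    by (intro mult_left_mono c0norm_least bound interp_error_bound_nonneg[OF K \<sigma>])
  finally show ?thesis .
qed

section \<open>The scalar Duhamel integral\<close>

definition duhamel :: "real \<Rightarrow> complex \<Rightarrow> (real \<Rightarrow> complex) \<Rightarrow> real \<Rightarrow> complex" where
  "duhamel \<tau> l w t = integral {-1..t} (\<lambda>s. exp (of_real (\<tau> * (t - s)) * l) * w s)"

text \<open>Factoring out exp(\<tau> t l) leaves an integrand independent of t, so the fundamental
  theorem of calculus applies.\<close>
lemma duhamel_factor:
  "duhamel \<tau> l w t = exp (of_real (\<tau> * t) * l) * integral {-1..t} (\<lambda>s. exp (- (of_real (\<tau> * s) * l)) * w s)"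
proof -
  have "exp (of_real (\<tau> * (t - s)) * l) = exp (of_real (\<tau> * t) * l) * exp (- (of_real (\<tau> * s) * l))" for s
    by (subst exp_add[symmetric]) (simp add: algebra_simps)
  then show ?thesis
    unfolding duhamel_def integral_mult_right[symmetric] by (simp add: mult.assoc)
qed

lemma has_vector_derivative_duhamel:
  assumes "continuous_on {-1..1} w" "x \<in> {-1..1}"
  shows "(duhamel \<tau> l w has_vector_derivative w x + of_real \<tau> * l * duhamel \<tau> l w x) (at x within {-1..1})"
proof -
  have E: "((\<lambda>t. exp (of_real (\<tau> * t) * l)) has_vector_derivative of_real \<tau> * l * exp (of_real (\<tau> * x) * l))
             (at x within {-1..1})"
  proof -
    have "((\<lambda>z. exp (of_real \<tau> * z * l)) has_field_derivative exp (of_real \<tau> * of_real x * l) * (of_real \<tau> * l))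
            (at (of_real x))"
      by (auto intro!: derivative_eq_intros)
    from has_vector_derivative_real_field[OF this] show ?thesis
      by (simp add: of_real_mult mult_ac)
  qed
  have I: "((\<lambda>t. integral {-1..t} (\<lambda>s. exp (- (of_real (\<tau> * s) * l)) * w s)) has_vector_derivative
             exp (- (of_real (\<tau> * x) * l)) * w x) (at x within {-1..1})"
    using assms by (intro integral_has_vector_derivative continuous_intros) auto
  have "duhamel \<tau> l w = (\<lambda>t. exp (of_real (\<tau> * t) * l) * integral {-1..t} (\<lambda>s. exp (- (of_real (\<tau> * s) * l)) * w s))"
    by (simp add: fun_eq_iff duhamel_factor)
  then show ?thesis
    by (rule ssubst, intro has_vector_derivative_eq_rhs[OF has_vector_derivative_mult[OF E I]])
      (simp add: mult.assoc[symmetric] exp_minus_inverse)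
qed

lemma continuous_on_duhamel:
  assumes "continuous_on {-1..1} w"
  shows "continuous_on {-1..1} (duhamel \<tau> l w)"
  unfolding continuous_on_eq_continuous_within
  using has_vector_derivative_continuous[OF has_vector_derivative_duhamel[OF assms]] by blast

lemma integral_exp_mult_diff:
  fixes c x :: real
  assumes "-1 \<le> x"
  shows "integral {-1..x} (\<lambda>s. exp (c * (x - s))) = (if c = 0 then x + 1 else (exp (c * (x + 1)) - 1) / c)"
proof (cases "c = 0")
  case True
  then show ?thesis
    using assms by simp
next
  case False
  have "((\<lambda>s. - exp (c * (x - s)) / c) has_vector_derivative exp (c * (x - s))) (at s within {-1..x})" for s
    using False by (auto intro!: derivative_eq_intros simp: has_real_derivative_iff_has_vector_derivative[symmetric])
  then have "((\<lambda>s. exp (c * (x - s))) has_integral - exp (c * (x - x)) / c - - exp (c * (x - -1)) / c) {-1..x}"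
    using assms by (intro fundamental_theorem_of_calculus) auto
  then show ?thesis
    using False by (simp add: integral_unique diff_divide_distrib)
qed

lemma integral_exp_mult_diff_mono:
  fixes c x :: real
  assumes "x \<in> {-1..1}"
  shows "integral {-1..x} (\<lambda>s. exp (c * (x - s))) \<le> integral {-1..1} (\<lambda>s. exp (c * (1 - s)))"
proof -
  have x: "-1 \<le> x" "x \<le> 1"
    using assms by auto
  consider "c = 0" | "c > 0" | "c < 0"
    by linarith
  then show ?thesis
  proof cases
    case 1
    then show ?thesis
      using x by (simp add: integral_exp_mult_diff)
  next
    case 2
    then have "exp (c * (x + 1)) \<le> exp (c * (1 + 1))"
      using x by (intro exp_le_cancel_iff[THEN iffD2] mult_left_mono) auto
    then show ?thesis
      using 2 x by (simp add: integral_exp_mult_diff divide_right_mono)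
  next
    case 3
    then have "exp (c * (1 + 1)) \<le> exp (c * (x + 1))"
      using x by (intro exp_le_cancel_iff[THEN iffD2] mult_left_mono_neg) auto
    then show ?thesis
      using 3 x by (simp add: integral_exp_mult_diff divide_right_mono_neg)
  qed
qed

lemma norm_duhamel_le:
  assumes w: "continuous_on {-1..1} w" and x: "x \<in> {-1..1}"
    and W: "\<And>s. s \<in> {-1..1} \<Longrightarrow> cmod (w s) \<le> W"
  shows "cmod (duhamel \<tau> l w x) \<le> W * integral {-1..1} (\<lambda>s. cmod (exp (of_real (\<tau> * (1 - s)) * l)))"
proof -
  have sub: "{-1..x} \<subseteq> {-1..1}"
    using x by auto
  have "0 \<le> W"
    using W[OF x] norm_ge_zero order_trans by blast
  have "cmod (duhamel \<tau> l w x) \<le> integral {-1..x} (\<lambda>s. exp (\<tau> * Re l * (x - s)) * W)"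
    unfolding duhamel_def
  proof (rule integral_norm_bound_integral)
    show "(\<lambda>s. exp (of_real (\<tau> * (x - s)) * l) * w s) integrable_on {-1..x}"
      using continuous_on_subset[OF w sub] by (intro integrable_continuous_interval continuous_intros)
    show "(\<lambda>s. exp (\<tau> * Re l * (x - s)) * W) integrable_on {-1..x}"
      by (intro integrable_continuous_interval continuous_intros)
    fix s assume "s \<in> {-1..x}"
    then show "cmod (exp (of_real (\<tau> * (x - s)) * l) * w s) \<le> exp (\<tau> * Re l * (x - s)) * W"
      using W sub by (auto simp: norm_mult norm_exp_eq_Re mult_ac intro!: mult_left_mono)
  qed
  also have "\<dots> = W * integral {-1..x} (\<lambda>s. exp (\<tau> * Re l * (x - s)))"
    by (simp add: mult.commute)
  also have "\<dots> \<le> W * integral {-1..1} (\<lambda>s. exp (\<tau> * Re l * (1 - s)))"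
    using \<open>0 \<le> W\<close> x by (intro mult_left_mono integral_exp_mult_diff_mono)
  also have "\<dots> = W * integral {-1..1} (\<lambda>s. cmod (exp (of_real (\<tau> * (1 - s)) * l)))"
    by (simp add: norm_exp_eq_Re mult_ac)
  finally show ?thesis .
qed

section \<open>The diagonalised convolution\<close>

lemma integral_exp_similar_eq_duhamel:
  assumes inv: "cm_right_inverse N Q Qinv" "cm_right_inverse N Qinv Q"
    and \<psi>: "\<And>m. m \<in> idx N \<Longrightarrow> continuous_on {-1..1} (\<psi> m)"
    and n: "n \<in> idx N" and t: "t \<in> {-1..1}"
  shows "integral {-1..t} (\<lambda>s. cm_apply N (cm_exp N (cm_scale (of_real (\<tau> * (t - s)))
             (cm_mult N Q (cm_mult N (cm_diag \<Lambda>) Qinv)))) (\<lambda>m. \<psi> m s) n)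
       = (\<Sum>a\<in>idx N. Q n a * duhamel \<tau> (\<Lambda> a) (\<lambda>s. cm_apply N Qinv (\<lambda>m. \<psi> m s) a) t)"
proof -
  define w where "w = (\<lambda>a s. cm_apply N Qinv (\<lambda>m. \<psi> m s) a)"
  have "continuous_on {-1..1} (w a)" for a
    using \<psi> unfolding w_def cm_apply_def by (intro continuous_intros) auto
  then have "continuous_on {-1..t} (w a)" for a
    by (rule continuous_on_subset) (use t in auto)
  then have int: "(\<lambda>s. Q n a * (exp (of_real (\<tau> * (t - s)) * \<Lambda> a) * w a s)) integrable_on {-1..t}" for a
    by (intro integrable_continuous_interval continuous_intros)
  have "integral {-1..t} (\<lambda>s. cm_apply N (cm_exp N (cm_scale (of_real (\<tau> * (t - s)))
             (cm_mult N Q (cm_mult N (cm_diag \<Lambda>) Qinv)))) (\<lambda>m. \<psi> m s) n)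
      = integral {-1..t} (\<lambda>s. \<Sum>a\<in>idx N. Q n a * (exp (of_real (\<tau> * (t - s)) * \<Lambda> a) * w a s))"
    using inv n by (simp add: cm_scale_similar cm_apply_exp_similar w_def)
  also have "\<dots> = (\<Sum>a\<in>idx N. Q n a * duhamel \<tau> (\<Lambda> a) (w a) t)"
    using int by (simp add: integral_sum duhamel_def)
  finally show ?thesis
    unfolding w_def .
qed

lemma duhamel_sum_derivative_bound:
  fixes y :: "int \<Rightarrow> real" and \<Lambda> :: "int \<Rightarrow> complex"
  assumes inv: "cm_right_inverse N Q Qinv"
    and \<psi>: "\<And>m. m \<in> idx N \<Longrightarrow> continuous_on {-1..1} (\<psi> m)"
    and y: "\<And>m s. m \<in> idx N \<Longrightarrow> s \<in> {-1..1} \<Longrightarrow> cmod (\<psi> m s) \<le> y m"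
    and n: "n \<in> idx N" and \<tau>: "0 \<le> \<tau>"
  defines "w \<equiv> \<lambda>a s. cm_apply N Qinv (\<lambda>m. \<psi> m s) a"
  defines "G \<equiv> \<lambda>t. of_real \<tau> * (\<Sum>a\<in>idx N. Q n a * duhamel \<tau> (\<Lambda> a) (w a) t)"
    and "G' \<equiv> \<lambda>x. of_real \<tau> * (\<Sum>a\<in>idx N. Q n a * (w a x + of_real \<tau> * \<Lambda> a * duhamel \<tau> (\<Lambda> a) (w a) x))"
    and "X \<equiv> \<lambda>a. integral {-1..1} (\<lambda>s. cmod (exp (of_real (\<tau> * (1 - s)) * \<Lambda> a)))"
  shows "\<And>x. x \<in> {-1..1} \<Longrightarrow> (G has_vector_derivative G' x) (at x within {-1..1})"
    and "continuous_on {-1..1} G'"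
    and "\<And>x. x \<in> {-1..1} \<Longrightarrow>
           cmod (G' x) \<le> \<tau> * (y n + abs_apply N Q (\<lambda>a. cmod (\<Lambda> a) * (\<tau> * X a * abs_apply N Qinv y a)) n)"
proof -
  have w: "continuous_on {-1..1} (w a)" for a
    using \<psi> unfolding w_def cm_apply_def by (intro continuous_intros) auto
  show "(G has_vector_derivative G' x) (at x within {-1..1})" if "x \<in> {-1..1}" for x
    unfolding G_def G'_def
    by (intro has_vector_derivative_mult_right has_vector_derivative_sum has_vector_derivative_duhamel w that)
  show "continuous_on {-1..1} G'"
    unfolding G'_def by (intro continuous_intros continuous_on_duhamel w)
  fix x :: real assume x: "x \<in> {-1..1}"
  have wy: "cmod (w a s) \<le> abs_apply N Qinv y a" if "s \<in> {-1..1}" for a s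
    unfolding w_def using y that by (intro norm_cm_apply_le)
  have "G' x = of_real \<tau> * (\<psi> n x + cm_apply N Q (\<lambda>a. of_real \<tau> * \<Lambda> a * duhamel \<tau> (\<Lambda> a) (w a) x) n)"
    using cm_apply_right_inverse[OF inv n, of "\<lambda>m. \<psi> m x"]
    by (simp add: G'_def w_def cm_apply_def distrib_left sum.distrib)
  moreover have "cmod (cm_apply N Q (\<lambda>a. of_real \<tau> * \<Lambda> a * duhamel \<tau> (\<Lambda> a) (w a) x) n)
      \<le> abs_apply N Q (\<lambda>a. cmod (\<Lambda> a) * (\<tau> * X a * abs_apply N Qinv y a)) n"
  proof (rule norm_cm_apply_le)
    fix a
    have "cmod (duhamel \<tau> (\<Lambda> a) (w a) x) \<le> abs_apply N Qinv y a * X a"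
      unfolding X_def using x wy by (intro norm_duhamel_le w)
    then have "cmod (\<Lambda> a) * cmod (duhamel \<tau> (\<Lambda> a) (w a) x) \<le> cmod (\<Lambda> a) * (abs_apply N Qinv y a * X a)"
      by (rule mult_left_mono) simp
    then have "\<tau> * (cmod (\<Lambda> a) * cmod (duhamel \<tau> (\<Lambda> a) (w a) x)) \<le> \<tau> * (cmod (\<Lambda> a) * (abs_apply N Qinv y a * X a))"
      using \<tau> by (rule mult_left_mono)
    then show "cmod (of_real \<tau> * \<Lambda> a * duhamel \<tau> (\<Lambda> a) (w a) x) \<le> cmod (\<Lambda> a) * (\<tau> * X a * abs_apply N Qinv y a)"
      using \<tau> by (simp add: norm_mult mult_ac)
  qed
  moreover have "cmod (\<psi> n x) \<le> y n"
    using y n x .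
  ultimately show "cmod (G' x) \<le> \<tau> * (y n + abs_apply N Q (\<lambda>a. cmod (\<Lambda> a) * (\<tau> * X a * abs_apply N Qinv y a)) n)"
    using \<tau> by (simp add: norm_mult) (intro mult_left_mono order_trans[OF norm_triangle_ineq] add_mono)
qed

lemma cm_apply_majorant:
  fixes x :: "int \<Rightarrow> real" and \<Lambda> :: "int \<Rightarrow> complex" and \<tau> :: real
  assumes n: "n \<in> idx N"
  defines "X \<equiv> \<lambda>a. integral {-1..1} (\<lambda>s. cmod (exp (of_real (\<tau> * (1 - s)) * \<Lambda> a)))"
    and "D1 \<equiv> \<lambda>a b. of_real (\<tau> * integral {-1..1}
               (\<lambda>s. cmod (cm_exp N (cm_scale (of_real (\<tau> * (1 - s))) (cm_diag \<Lambda>)) a b)))"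
  shows "cm_apply N (cm_add (cm_abs A) (cm_mult N (cm_abs Q) (cm_mult N (cm_abs (cm_diag \<Lambda>))
             (cm_mult N D1 (cm_mult N (cm_abs Qinv) (cm_abs A)))))) (\<lambda>m. of_real (x m)) n
       = of_real (abs_apply N A x n + abs_apply N Q (\<lambda>a. cmod (\<Lambda> a) * (\<tau> * X a * abs_apply N Qinv (abs_apply N A x) a)) n)"
proof -
  have D1: "cm_apply N D1 v a = of_real (\<tau> * X a) * v a" if a: "a \<in> idx N" for v a
  proof -
    have "D1 a b = (if a = b then of_real (\<tau> * X a) else 0)" for b
      unfolding D1_def cm_scale_diag using a by (simp add: cm_exp_diag X_def)
    then show ?thesis
      using a by (simp add: cm_apply_def if_distrib[of "\<lambda>x. x * _"] cong: if_cong)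
  qed
  have abs_diag: "cm_abs (cm_diag \<Lambda>) = cm_diag (\<lambda>a. of_real (cmod (\<Lambda> a)))"
    by (auto simp: fun_eq_iff cm_abs_def cm_diag_def)
  have inner: "cm_apply N (cm_abs (cm_diag \<Lambda>)) (cm_apply N D1 (cm_apply N (cm_abs Qinv) (cm_apply N (cm_abs A) (\<lambda>m. of_real (x m))))) a
      = of_real (cmod (\<Lambda> a) * (\<tau> * X a * abs_apply N Qinv (abs_apply N A x) a))" if a: "a \<in> idx N" for a
    using a by (simp add: abs_diag cm_apply_diag D1 cm_apply_abs[abs_def])
  show ?thesis
    by (simp only: cm_apply_add cm_apply_mult cm_apply_cong[OF inner] cm_apply_abs of_real_add)
qed

lemma l1nu_C0_le_opnorm:
  assumes "1 \<le> \<nu>" "0 \<le> c"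
    and \<phi>: "\<And>m. m \<in> idx N \<Longrightarrow> continuous_on {-1..1} (\<phi> m)"
    and bound: "\<And>n. n \<in> idx N \<Longrightarrow> c0norm (\<psi> n) \<le> c * cmod (cm_apply N M (\<lambda>m. of_real (c0norm (\<phi> m))) n)"
  shows "l1nu_C0 N \<nu> \<psi> \<le> c * opnorm_l1nu N \<nu> M * l1nu_C0 N \<nu> \<phi>"
proof -
  have "l1nu_C0 N \<nu> \<psi> \<le> c * l1nu N \<nu> (cm_apply N M (\<lambda>m. of_real (c0norm (\<phi> m))))"
    using assms(1) by (intro l1nu_C0_le_l1nu bound) auto
  also have "\<dots> \<le> c * (opnorm_l1nu N \<nu> M * l1nu N \<nu> (\<lambda>m. of_real (c0norm (\<phi> m))))"
    using assms(1,2) by (intro mult_left_mono l1nu_cm_apply_le)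
  finally show ?thesis
    by (simp add: l1nu_c0norm[OF \<phi>] mult.assoc)
qed

lemma duhamel_interp_error_le:
  fixes \<Lambda> :: "int \<Rightarrow> complex" and A :: "int \<Rightarrow> int \<Rightarrow> complex"
  assumes inv: "cm_right_inverse N Q Qinv" "cm_right_inverse N Qinv Q"
    and K: "1 \<le> K" and \<sigma>: "interp_error_bound K \<sigma>" and \<tau>: "0 \<le> \<tau>"
    and \<phi>: "\<And>m. m \<in> idx N \<Longrightarrow> continuous_on {-1..1} (\<phi> m)" and n: "n \<in> idx N"
  defines "g \<equiv> \<lambda>t. of_real \<tau> * integral {-1..t} (\<lambda>s. cm_apply N (cm_exp N (cm_scale (of_real (\<tau> * (t - s)))
                    (cm_mult N Q (cm_mult N (cm_diag \<Lambda>) Qinv)))) (cm_apply N A (\<lambda>m. \<phi> m s)) n)"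
    and "D1 \<equiv> \<lambda>a b. of_real (\<tau> * integral {-1..1}
               (\<lambda>s. cmod (cm_exp N (cm_scale (of_real (\<tau> * (1 - s))) (cm_diag \<Lambda>)) a b)))"
  shows "c0norm (\<lambda>t. g t - interpK K g t)
           \<le> \<tau> * \<sigma> * cmod (cm_apply N (cm_add (cm_abs A) (cm_mult N (cm_abs Q) (cm_mult N (cm_abs (cm_diag \<Lambda>))
                 (cm_mult N D1 (cm_mult N (cm_abs Qinv) (cm_abs A)))))) (\<lambda>m. of_real (c0norm (\<phi> m))) n)"
proof -
  define \<psi> where "\<psi> = (\<lambda>m s. cm_apply N A (\<lambda>k. \<phi> k s) m)"
  define y where "y = abs_apply N A (\<lambda>m. c0norm (\<phi> m))"
  define X where "X = (\<lambda>a. integral {-1..1} (\<lambda>s. cmod (exp (of_real (\<tau> * (1 - s)) * \<Lambda> a))))"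
  define B where "B = y n + abs_apply N Q (\<lambda>a. cmod (\<Lambda> a) * (\<tau> * X a * abs_apply N Qinv y a)) n"
  have \<psi>_cont: "continuous_on {-1..1} (\<psi> m)" for m
    using \<phi> unfolding \<psi>_def cm_apply_def by (intro continuous_intros) auto
  have \<psi>_le: "cmod (\<psi> m s) \<le> y m" if "s \<in> {-1..1}" for m s
    unfolding \<psi>_def y_def using \<phi> that by (intro norm_cm_apply_le c0norm_upper)
  note G = duhamel_sum_derivative_bound[OF inv(1) \<psi>_cont \<psi>_le n \<tau>, where \<Lambda> = \<Lambda>]
  have "c0norm (\<lambda>t. g t - interpK K g t) \<le> \<sigma> * (\<tau> * B)"
    unfolding B_def X_def
  proof (rule interp_error_le[OF K \<sigma> _ G])
    fix t :: real assume "t \<in> {-1..1}"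
    then show "g t = of_real \<tau> * (\<Sum>a\<in>idx N. Q n a * duhamel \<tau> (\<Lambda> a) (\<lambda>s. cm_apply N Qinv (\<lambda>m. \<psi> m s) a) t)"
      unfolding g_def using integral_exp_similar_eq_duhamel[OF inv \<psi>_cont n] by (simp add: \<psi>_def)
  qed
  also have "\<dots> = \<tau> * \<sigma> * B"
    by (simp add: mult_ac)
  also have "\<dots> \<le> \<tau> * \<sigma> * \<bar>B\<bar>"
    using interp_error_bound_nonneg[OF K \<sigma>] \<tau> by (intro mult_left_mono) auto
  also have "\<bar>B\<bar> = cmod (cm_apply N (cm_add (cm_abs A) (cm_mult N (cm_abs Q) (cm_mult N (cm_abs (cm_diag \<Lambda>))
                 (cm_mult N D1 (cm_mult N (cm_abs Qinv) (cm_abs A)))))) (\<lambda>m. of_real (c0norm (\<phi> m))) n)"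
    unfolding cm_apply_majorant[OF n] B_def y_def X_def D1_def by (simp only: norm_of_real)
  finally show ?thesis .
qed

theorem lemma4p8:
  fixes \<nu> \<tau> \<sigma> :: real and N K j :: nat
    and \<Lambda> :: "int \<Rightarrow> complex"
    and Q Qinv :: "int \<Rightarrow> int \<Rightarrow> complex"
    and \<phi> :: "int \<Rightarrow> real \<Rightarrow> complex"
  assumes "\<nu> \<ge> 1" and "N \<ge> 1" and "K \<ge> 1" and "\<tau> > 0"
    and Qinv1: "\<forall>i\<in>idx N. \<forall>k\<in>idx N. cm_mult N Q Qinv i k = cm_id i k"
    and Qinv2: "\<forall>i\<in>idx N. \<forall>k\<in>idx N. cm_mult N Qinv Q i k = cm_id i k"
    and sigma: "\<forall>f f'. (\<forall>x\<in>{-1..1}. (f has_vector_derivative f' x) (at x within {-1..1}))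
                   \<and> continuous_on {-1..1} f'
                 \<longrightarrow> c0norm (\<lambda>x. f x - interpK K f x) \<le> \<sigma> * c0norm f'"
    and phi_cont: "\<forall>n\<in>idx N. continuous_on {-1..1} (\<phi> n)"
  shows
   "let L = cm_mult N Q (cm_mult N (cm_diag \<Lambda>) Qinv);
        Dj = cm_pow N Dmat j;
        g = (\<lambda>n t. complex_of_real \<tau> * integral {-1..t}
               (\<lambda>s. cm_apply N (cm_exp N (cm_scale (complex_of_real (\<tau> * (t - s))) L))
                       (cm_apply N Dj (\<lambda>m. \<phi> m s)) n));
        D1 = (\<lambda>a b. complex_of_real (\<tau> * integral {-1..1}
               (\<lambda>s. cmod (cm_exp N (cm_scale (complex_of_real (\<tau> * (1 - s))) (cm_diag \<Lambda>)) a b))));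
        M = cm_add (cm_abs Dj)
              (cm_mult N (cm_abs Q) (cm_mult N (cm_abs (cm_diag \<Lambda>))
                 (cm_mult N D1 (cm_mult N (cm_abs Qinv) (cm_abs Dj)))))
    in l1nu_C0 N \<nu> (\<lambda>n t. g n t - interpK K (g n) t)
       \<le> \<tau> * \<sigma> * opnorm_l1nu N \<nu> M * l1nu_C0 N \<nu> \<phi>"
proof -
  have \<sigma>: "interp_error_bound K \<sigma>"
    using sigma unfolding interp_error_bound_def .
  have inv: "cm_right_inverse N Q Qinv" "cm_right_inverse N Qinv Q"
    using Qinv1 Qinv2 unfolding cm_right_inverse_def by auto
  show ?thesis
    unfolding Let_def using assms(1,3,4) phi_cont interp_error_bound_nonneg[OF assms(3) \<sigma>]
    by (intro l1nu_C0_le_opnorm duhamel_interp_error_le[OF inv _ \<sigma>]) auto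
qed

end
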